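(* Let $X$ be a connected quandle, $a\in X$, and let $\widetilde X$ be the quandle $\mathrm{Ker}(\varepsilon_0)$ with operation $g\lhd h=e_a^{-1}gh^{-1}e_ah$. Then $\widetilde X$ is connected.
   Context: A quandle is a set $X$ with a binary operation $\lhd$ such that $a\lhd a=a$, each $x\mapsto x\lhd a$ is bijective, and $(a\lhd b)\lhd c=(a\lhd c)\lhd(b\lhd c)$. The adjoint group $\mathrm{As}(X)$ has generators $e_x$ ($x\in X$) and relations $e_{x\lhd y}=e_y^{-1}e_xe_y$; it acts on $X$ by $x\cdot e_y=x\lhd y$, and $X$ is connected if this action is transitive. For connected $X$, $\varepsilon_0:\mathrm{As}(X)\to\mathbb{Z}$ is the homomorphism with $\varepsilon_0(e_x)=1$ for all $x$. *)

theory Defs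
  imports "HOL-Algebra.Group"
begin

definition quandle :: "'a set \<Rightarrow> ('a \<Rightarrow> 'a \<Rightarrow> 'a) \<Rightarrow> bool" where
  "quandle X op \<longleftrightarrow>
     (\<forall>x\<in>X. \<forall>y\<in>X. op x y \<in> X) \<and>
     (\<forall>a\<in>X. op a a = a) \<and>
     (\<forall>a\<in>X. bij_betw (\<lambda>x. op x a) X X) \<and>
     (\<forall>a\<in>X. \<forall>b\<in>X. \<forall>c\<in>X. op (op a b) c = op (op a c) (op b c))"

text \<open>Words: lists of (generator, sign); (x, True) stands for e_x, (x, False) for e_x^{-1}.
  The congruence generated by free cancellation and the relations e_{x \<lhd> y} = e_y^{-1} e_x e_y.\<close>

inductive as_rel :: "'a set \<Rightarrow> ('a \<Rightarrow> 'a \<Rightarrow> 'a) \<Rightarrow> ('a \<times> bool) list \<Rightarrow> ('a \<times> bool) list \<Rightarrow> bool"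
  for X :: "'a set" and op :: "'a \<Rightarrow> 'a \<Rightarrow> 'a" where
  as_refl: "w \<in> lists (X \<times> UNIV) \<Longrightarrow> as_rel X op w w"
| as_sym: "as_rel X op u v \<Longrightarrow> as_rel X op v u"
| as_trans: "as_rel X op u v \<Longrightarrow> as_rel X op v w \<Longrightarrow> as_rel X op u w"
| as_ctxt: "as_rel X op u v \<Longrightarrow> p \<in> lists (X \<times> UNIV) \<Longrightarrow> q \<in> lists (X \<times> UNIV)
             \<Longrightarrow> as_rel X op (p @ u @ q) (p @ v @ q)"
| as_cancel: "x \<in> X \<Longrightarrow> as_rel X op [(x, b), (x, \<not> b)] []"
| as_quandle: "x \<in> X \<Longrightarrow> y \<in> X \<Longrightarrow>
             as_rel X op [(op x y, True)] [(y, False), (x, True), (y, True)]"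

definition as_class :: "'a set \<Rightarrow> ('a \<Rightarrow> 'a \<Rightarrow> 'a) \<Rightarrow> ('a \<times> bool) list \<Rightarrow> ('a \<times> bool) list set" where
  "as_class X op w = {v. as_rel X op w v}"

definition as_rep :: "('a \<times> bool) list set \<Rightarrow> ('a \<times> bool) list" where
  "as_rep A = (SOME w. w \<in> A)"

definition As :: "'a set \<Rightarrow> ('a \<Rightarrow> 'a \<Rightarrow> 'a) \<Rightarrow> ('a \<times> bool) list set monoid" where
  "As X op = \<lparr> carrier = as_class X op ` lists (X \<times> UNIV),
               mult = (\<lambda>A B. as_class X op (as_rep A @ as_rep B)),
               one = as_class X op [] \<rparr>"

definition as_gen :: "'a set \<Rightarrow> ('a \<Rightarrow> 'a \<Rightarrow> 'a) \<Rightarrow> 'a \<Rightarrow> ('a \<times> bool) list set" where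
  "as_gen X op x = as_class X op [(x, True)]"

definition eps_word :: "('a \<times> bool) list \<Rightarrow> int" where
  "eps_word w = sum_list (map (\<lambda>(x, b). if b then 1 else -1) w)"

definition eps0 :: "('a \<times> bool) list set \<Rightarrow> int" where
  "eps0 A = eps_word (as_rep A)"

text \<open>X is connected iff the action of As(X) on X (x \<cdot> e_y = x \<lhd> y) is transitive,
  i.e. any two elements are related by a finite chain of steps x \<mapsto> x \<lhd> y or its inverse
  (the orbits of the group generated by the e_y and their inverses).\<close>

definition quandle_step :: "'a set \<Rightarrow> ('a \<Rightarrow> 'a \<Rightarrow> 'a) \<Rightarrow> ('a \<times> 'a) set" where
  "quandle_step X op = {(u, op u z) | u z. u \<in> X \<and> z \<in> X}"

definition quandle_connected :: "'a set \<Rightarrow> ('a \<Rightarrow> 'a \<Rightarrow> 'a) \<Rightarrow> bool" where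
  "quandle_connected X op \<longleftrightarrow>
     (\<forall>x\<in>X. \<forall>y\<in>X. (x, y) \<in> (quandle_step X op \<union> (quandle_step X op)\<inverse>)\<^sup>*)"

definition tilde_carrier :: "'a set \<Rightarrow> ('a \<Rightarrow> 'a \<Rightarrow> 'a) \<Rightarrow> ('a \<times> bool) list set set" where
  "tilde_carrier X op = {g \<in> carrier (As X op). eps0 g = 0}"

definition tilde_op :: "'a set \<Rightarrow> ('a \<Rightarrow> 'a \<Rightarrow> 'a) \<Rightarrow> 'a
     \<Rightarrow> ('a \<times> bool) list set \<Rightarrow> ('a \<times> bool) list set \<Rightarrow> ('a \<times> bool) list set" where
  "tilde_op X op a g h =
     inv\<^bsub>As X op\<^esub> (as_gen X op a) \<otimes>\<^bsub>As X op\<^esub> g \<otimes>\<^bsub>As X op\<^esub> inv\<^bsub>As X op\<^esub> h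
       \<otimes>\<^bsub>As X op\<^esub> as_gen X op a \<otimes>\<^bsub>As X op\<^esub> h"

end

theory Submission
  imports Defs "HOL-Algebra.Elementary_Groups"
begin

text \<open>Connectedness of X lets one conjugate e_a to any generator e_b by an element h of the
  kernel K of eps0: follow a chain from a to b, multiplying by e_z or its inverse and restoring
  degree 0 with e_a. For such h the operation reads U \<lhd> h = e_a\<inverse> U e_b, and comparing two of
  these moves links every U in K to U e_b e_c\<inverse> and to U e_c\<inverse> e_b. Conjugation by powers of
  e_a permutes the generators, so appending a letter to a word w of degree n multiplies
  [w] e_a^(-n) on the right by a factor e_y e_a\<inverse> or e_y\<inverse> e_a. By induction on words every
  element of K is linked to 1.\<close>

context group
begin

lemma m_inv_cancel_left: "x \<in> carrier G \<Longrightarrow> y \<in> carrier G \<Longrightarrow> x \<otimes> (inv x \<otimes> y) = y"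
  by (simp add: m_assoc [symmetric])

lemma inv_m_cancel_left: "x \<in> carrier G \<Longrightarrow> y \<in> carrier G \<Longrightarrow> inv x \<otimes> (x \<otimes> y) = y"
  by (simp add: m_assoc [symmetric])

lemmas group_simps = m_assoc inv_mult_group m_inv_cancel_left inv_m_cancel_left

lemma int_pow_conj_closed:
  assumes g: "g \<in> carrier G" and E: "E \<subseteq> carrier G"
    and conj: "\<And>x. x \<in> E \<Longrightarrow> inv g \<otimes> x \<otimes> g \<in> E"
    and conj_inv: "\<And>x. x \<in> E \<Longrightarrow> g \<otimes> x \<otimes> inv g \<in> E"
    and x: "x \<in> E"
  shows "inv (g [^] (n::int)) \<otimes> x \<otimes> g [^] n \<in> E"
proof (induction n rule: int_induct [where k = 0])
  case base
  show ?case using x E by auto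
next
  case (step1 i)
  have "g [^] (i + 1) = g [^] i \<otimes> g"
    using g by (simp add: int_pow_mult)
  then have "inv (g [^] (i + 1)) \<otimes> x \<otimes> g [^] (i + 1) = inv g \<otimes> (inv (g [^] i) \<otimes> x \<otimes> g [^] i) \<otimes> g"
    using g x E by (auto simp: group_simps)
  then show ?case using conj [OF step1.IH] by simp
next
  case (step2 i)
  have "g [^] (i - 1) = g [^] i \<otimes> inv g"
    using g int_pow_mult [OF g, of i "-1"] by (simp add: int_pow_neg)
  then have "inv (g [^] (i - 1)) \<otimes> x \<otimes> g [^] (i - 1) = g \<otimes> (inv (g [^] i) \<otimes> x \<otimes> g [^] i) \<otimes> inv g"
    using g x E by (auto simp: group_simps)
  then show ?case using conj_inv [OF step2.IH] by simp
qed

end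

definition word_inv :: "('a \<times> bool) list \<Rightarrow> ('a \<times> bool) list" where
  "word_inv w = rev (map (\<lambda>(x, b). (x, \<not> b)) w)"

lemma word_inv_in_lists: "w \<in> lists (X \<times> UNIV) \<Longrightarrow> word_inv w \<in> lists (X \<times> UNIV)"
  by (auto simp: word_inv_def)

lemma eps_word_as_rel: "as_rel X op u v \<Longrightarrow> eps_word u = eps_word v"
  by (induction rule: as_rel.induct) (auto simp: eps_word_def)

lemma as_class_eq: "as_rel X op u v \<Longrightarrow> as_class X op u = as_class X op v"
  unfolding as_class_def by (auto intro: as_sym as_trans)

lemma as_rel_append_right:
  "as_rel X op u u' \<Longrightarrow> v \<in> lists (X \<times> UNIV) \<Longrightarrow> as_rel X op (u @ v) (u' @ v)"
  using as_ctxt [of X op u u' "[]" v] by simp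

lemma as_rel_append_left:
  "as_rel X op v v' \<Longrightarrow> u \<in> lists (X \<times> UNIV) \<Longrightarrow> as_rel X op (u @ v) (u @ v')"
  using as_ctxt [of X op v v' u "[]"] by simp

lemma as_rel_as_rep: "u \<in> lists (X \<times> UNIV) \<Longrightarrow> as_rel X op u (as_rep (as_class X op u))"
proof -
  assume "u \<in> lists (X \<times> UNIV)"
  then have "u \<in> as_class X op u" by (simp add: as_class_def as_refl)
  then have "as_rep (as_class X op u) \<in> as_class X op u"
    unfolding as_rep_def by (rule someI)
  then show ?thesis by (simp add: as_class_def)
qed

lemma as_rel_word_inv_append:
  "w \<in> lists (X \<times> UNIV) \<Longrightarrow> as_rel X op (word_inv w @ w) []"
proof (induction w)
  case Nil
  show ?case by (simp add: word_inv_def as_refl)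
next
  case (Cons s w)
  obtain x b where s: "s = (x, b)" by force
  have x: "x \<in> X" and w: "w \<in> lists (X \<times> UNIV)" using Cons.prems s by auto
  have "word_inv (s # w) @ s # w = word_inv w @ ([(x, \<not> b), (x, \<not> \<not> b)] @ w)"
    by (simp add: word_inv_def s)
  moreover have "as_rel X op (word_inv w @ ([(x, \<not> b), (x, \<not> \<not> b)] @ w)) (word_inv w @ ([] @ w))"
    using as_rel_append_left [OF as_rel_append_right [OF as_cancel [OF x] w] word_inv_in_lists [OF w]] .
  ultimately show ?case using Cons.IH [OF w] by (auto intro: as_trans)
qed

locale quandle_adjoint =
  fixes X :: "'a set" and op :: "'a \<Rightarrow> 'a \<Rightarrow> 'a"
  assumes quandle: "quandle X op"
begin

abbreviation G :: "('a \<times> bool) list set monoid" where "G \<equiv> As X op"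

abbreviation e :: "'a \<Rightarrow> ('a \<times> bool) list set" where "e x \<equiv> as_gen X op x"

lemma op_closed: "x \<in> X \<Longrightarrow> y \<in> X \<Longrightarrow> op x y \<in> X"
  using quandle by (simp add: quandle_def)

lemma as_rel_in_lists: "as_rel X op u v \<Longrightarrow> u \<in> lists (X \<times> UNIV) \<and> v \<in> lists (X \<times> UNIV)"
  by (induction rule: as_rel.induct) (auto simp: op_closed)

lemma as_class_in_carrier: "u \<in> lists (X \<times> UNIV) \<Longrightarrow> as_class X op u \<in> carrier G"
  by (simp add: As_def)

lemma as_rep_of_carrier:
  assumes "A \<in> carrier G"
  shows "as_rep A \<in> lists (X \<times> UNIV)" and "as_class X op (as_rep A) = A"
proof -
  obtain u where u: "u \<in> lists (X \<times> UNIV)" "A = as_class X op u"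
    using assms by (auto simp: As_def)
  have rel: "as_rel X op u (as_rep A)" using as_rel_as_rep [OF u(1)] u(2) by simp
  show "as_rep A \<in> lists (X \<times> UNIV)" using as_rel_in_lists [OF rel] by simp
  show "as_class X op (as_rep A) = A" using as_class_eq [OF rel] u(2) by simp
qed

lemma As_mult_class:
  assumes u: "u \<in> lists (X \<times> UNIV)" and v: "v \<in> lists (X \<times> UNIV)"
  shows "as_class X op u \<otimes>\<^bsub>G\<^esub> as_class X op v = as_class X op (u @ v)"
proof -
  let ?u' = "as_rep (as_class X op u)" and ?v' = "as_rep (as_class X op v)"
  have "as_rel X op (u @ v) (?u' @ v)"
    using as_rel_append_right [OF as_rel_as_rep [OF u] v] .
  moreover have "as_rel X op (?u' @ v) (?u' @ ?v')"
    using as_rel_append_left [OF as_rel_as_rep [OF v]] as_rep_of_carrier(1) as_class_in_carrier [OF u] .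
  ultimately have "as_rel X op (u @ v) (?u' @ ?v')" by (rule as_trans)
  then show ?thesis by (simp add: As_def as_class_eq)
qed

lemma group_As: "group G"
proof (rule groupI)
  fix A B assume "A \<in> carrier G" "B \<in> carrier G"
  then show "A \<otimes>\<^bsub>G\<^esub> B \<in> carrier G"
    using as_rep_of_carrier(1) by (simp add: As_def)
next
  show "\<one>\<^bsub>G\<^esub> \<in> carrier G" by (simp add: As_def)
next
  fix A B C assume "A \<in> carrier G" "B \<in> carrier G" "C \<in> carrier G"
  then obtain u v w where "u \<in> lists (X \<times> UNIV)" "v \<in> lists (X \<times> UNIV)" "w \<in> lists (X \<times> UNIV)"
    and "A = as_class X op u" "B = as_class X op v" "C = as_class X op w"
    using as_rep_of_carrier by metis
  then show "A \<otimes>\<^bsub>G\<^esub> B \<otimes>\<^bsub>G\<^esub> C = A \<otimes>\<^bsub>G\<^esub> (B \<otimes>\<^bsub>G\<^esub> C)"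
    by (simp add: As_mult_class)
next
  fix A assume "A \<in> carrier G"
  then show "\<one>\<^bsub>G\<^esub> \<otimes>\<^bsub>G\<^esub> A = A"
    using As_mult_class [of "[]" "as_rep A"] as_rep_of_carrier by (simp add: As_def)
next
  fix A assume A: "A \<in> carrier G"
  let ?w = "as_rep A"
  have w: "?w \<in> lists (X \<times> UNIV)" using as_rep_of_carrier(1) [OF A] .
  have "as_class X op (word_inv ?w) \<otimes>\<^bsub>G\<^esub> A = \<one>\<^bsub>G\<^esub>"
    using As_mult_class [OF word_inv_in_lists [OF w] w] as_rep_of_carrier(2) [OF A]
      as_class_eq [OF as_rel_word_inv_append [OF w]]
    by (simp add: As_def)
  then show "\<exists>B \<in> carrier G. B \<otimes>\<^bsub>G\<^esub> A = \<one>\<^bsub>G\<^esub>"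
    using as_class_in_carrier [OF word_inv_in_lists [OF w]] by blast
qed

sublocale As: group G
  by (rule group_As)

lemma as_gen_in_carrier [simp]: "x \<in> X \<Longrightarrow> e x \<in> carrier G"
  unfolding as_gen_def by (rule as_class_in_carrier) auto

lemma inv_as_gen: "x \<in> X \<Longrightarrow> inv\<^bsub>G\<^esub> (e x) = as_class X op [(x, False)]"
proof (rule As.inv_equality)
  assume x: "x \<in> X"
  have "as_class X op [(x, False)] \<otimes>\<^bsub>G\<^esub> e x = as_class X op ([(x, False)] @ [(x, True)])"
    unfolding as_gen_def using x by (simp add: As_mult_class del: append.simps)
  also have "\<dots> = \<one>\<^bsub>G\<^esub>"
    using as_class_eq [OF as_cancel [where b = False, OF x]] by (simp add: As_def)
  finally show "as_class X op [(x, False)] \<otimes>\<^bsub>G\<^esub> e x = \<one>\<^bsub>G\<^esub>" .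
qed (auto intro: as_class_in_carrier)

lemma as_gen_op:
  assumes x: "x \<in> X" and y: "y \<in> X"
  shows "e (op x y) = inv\<^bsub>G\<^esub> (e y) \<otimes>\<^bsub>G\<^esub> e x \<otimes>\<^bsub>G\<^esub> e y"
proof -
  have "inv\<^bsub>G\<^esub> (e y) \<otimes>\<^bsub>G\<^esub> e x \<otimes>\<^bsub>G\<^esub> e y = as_class X op ([(y, False)] @ [(x, True)] @ [(y, True)])"
    using x y unfolding inv_as_gen [OF y] by (simp add: as_gen_def As_mult_class del: append.simps)
  also have "\<dots> = e (op x y)"
    using as_class_eq [OF as_quandle [OF x y]] by (simp add: as_gen_def)
  finally show ?thesis by simp
qed

lemma as_class_snoc:
  assumes "w \<in> lists (X \<times> UNIV)" and "x \<in> X"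
  shows "as_class X op (w @ [(x, True)]) = as_class X op w \<otimes>\<^bsub>G\<^esub> e x"
    and "as_class X op (w @ [(x, False)]) = as_class X op w \<otimes>\<^bsub>G\<^esub> inv\<^bsub>G\<^esub> (e x)"
  using assms unfolding inv_as_gen [OF assms(2)] by (simp_all add: as_gen_def As_mult_class)

lemma eps0_as_class: "u \<in> lists (X \<times> UNIV) \<Longrightarrow> eps0 (as_class X op u) = eps_word u"
  unfolding eps0_def using eps_word_as_rel [OF as_rel_as_rep] by metis

lemma eps0_hom: "eps0 \<in> hom G integer_group"
proof (rule homI)
  fix A B assume "A \<in> carrier G" "B \<in> carrier G"
  then show "eps0 (A \<otimes>\<^bsub>G\<^esub> B) = eps0 A \<otimes>\<^bsub>integer_group\<^esub> eps0 B"
    using as_rep_of_carrier(1) by (simp add: As_def eps0_as_class) (simp add: eps0_def eps_word_def)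
qed simp

sublocale eps0: group_hom G integer_group eps0
  by (simp add: group_hom_def group_hom_axioms_def group_As eps0_hom)

lemma eps0_as_gen [simp]: "x \<in> X \<Longrightarrow> eps0 (e x) = 1"
  unfolding as_gen_def by (subst eps0_as_class) (auto simp: eps_word_def)

lemma conj_int_pow_as_gen:
  assumes a: "a \<in> X" and x: "x \<in> X"
  shows "\<exists>y \<in> X. inv\<^bsub>G\<^esub> (e a [^]\<^bsub>G\<^esub> (n::int)) \<otimes>\<^bsub>G\<^esub> e x \<otimes>\<^bsub>G\<^esub> e a [^]\<^bsub>G\<^esub> n = e y"
proof -
  have "inv\<^bsub>G\<^esub> (e a [^]\<^bsub>G\<^esub> n) \<otimes>\<^bsub>G\<^esub> e x \<otimes>\<^bsub>G\<^esub> e a [^]\<^bsub>G\<^esub> n \<in> e ` X"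
  proof (rule As.int_pow_conj_closed)
    fix z assume "z \<in> e ` X"
    then obtain y where y: "y \<in> X" "z = e y" by blast
    show "inv\<^bsub>G\<^esub> (e a) \<otimes>\<^bsub>G\<^esub> z \<otimes>\<^bsub>G\<^esub> e a \<in> e ` X"
      using as_gen_op [OF y(1) a] op_closed [OF y(1) a] y(2) by auto
    have "y \<in> (\<lambda>u. op u a) ` X"
      using quandle a y(1) by (auto simp: quandle_def bij_betw_def)
    then obtain u where u: "u \<in> X" "y = op u a" by blast
    have "e a \<otimes>\<^bsub>G\<^esub> z \<otimes>\<^bsub>G\<^esub> inv\<^bsub>G\<^esub> (e a) = e u"
      using a u by (simp add: y(2) as_gen_op As.group_simps)
    then show "e a \<otimes>\<^bsub>G\<^esub> z \<otimes>\<^bsub>G\<^esub> inv\<^bsub>G\<^esub> (e a) \<in> e ` X" using u(1) by simp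
  qed (use a x in auto)
  then show ?thesis by auto
qed

end

locale connected_quandle_tilde = quandle_adjoint +
  fixes a :: 'a
  assumes connected: "quandle_connected X op" and base_point: "a \<in> X"
begin

abbreviation K :: "('a \<times> bool) list set set" where "K \<equiv> tilde_carrier X op"

abbreviation tilde_step :: "(('a \<times> bool) list set \<times> ('a \<times> bool) list set) set" where
  "tilde_step \<equiv> quandle_step K (tilde_op X op a)"

abbreviation tilde_linked :: "('a \<times> bool) list set \<Rightarrow> ('a \<times> bool) list set \<Rightarrow> bool" where
  "tilde_linked U V \<equiv> (U, V) \<in> (tilde_step \<union> tilde_step\<inverse>)\<^sup>*"

lemma tilde_carrier_iff: "g \<in> K \<longleftrightarrow> g \<in> carrier G \<and> eps0 g = 0"
  by (simp add: tilde_carrier_def)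

lemma ex_kernel_conj_base_point:
  assumes "b \<in> X"
  shows "\<exists>h \<in> K. inv\<^bsub>G\<^esub> h \<otimes>\<^bsub>G\<^esub> e a \<otimes>\<^bsub>G\<^esub> h = e b"
proof -
  have "(a, b) \<in> (quandle_step X op \<union> (quandle_step X op)\<inverse>)\<^sup>*"
    using connected base_point assms by (simp add: quandle_connected_def)
  then show ?thesis
  proof (induction rule: rtrancl_induct)
    case base
    show ?case using base_point by (intro bexI [of _ "\<one>\<^bsub>G\<^esub>"]) (simp_all add: tilde_carrier_iff)
  next
    case (step c d)
    from step.IH obtain h where h: "h \<in> K" "inv\<^bsub>G\<^esub> h \<otimes>\<^bsub>G\<^esub> e a \<otimes>\<^bsub>G\<^esub> h = e c" by blast
    have hG: "h \<in> carrier G" and h0: "eps0 h = 0" using h(1) by (simp_all add: tilde_carrier_iff)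
    from step.hyps(2) show ?case
    proof
      assume "(c, d) \<in> quandle_step X op"
      then obtain z where c: "c \<in> X" and z: "z \<in> X" and d: "d = op c z"
        by (auto simp: quandle_step_def)
      let ?h = "inv\<^bsub>G\<^esub> (e a) \<otimes>\<^bsub>G\<^esub> h \<otimes>\<^bsub>G\<^esub> e z"
      have "?h \<in> K" using base_point z hG h0 by (simp add: tilde_carrier_iff)
      moreover have "inv\<^bsub>G\<^esub> ?h \<otimes>\<^bsub>G\<^esub> e a \<otimes>\<^bsub>G\<^esub> ?h = inv\<^bsub>G\<^esub> (e z) \<otimes>\<^bsub>G\<^esub> e c \<otimes>\<^bsub>G\<^esub> e z"
        using base_point z hG by (simp add: As.group_simps flip: h(2))
      ultimately show ?thesis using as_gen_op [OF c z] d by auto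
    next
      assume "(c, d) \<in> (quandle_step X op)\<inverse>"
      then obtain z where d: "d \<in> X" and z: "z \<in> X" and c: "c = op d z"
        by (auto simp: quandle_step_def)
      let ?h = "e a \<otimes>\<^bsub>G\<^esub> h \<otimes>\<^bsub>G\<^esub> inv\<^bsub>G\<^esub> (e z)"
      have "?h \<in> K" using base_point z hG h0 by (simp add: tilde_carrier_iff)
      moreover have "inv\<^bsub>G\<^esub> ?h \<otimes>\<^bsub>G\<^esub> e a \<otimes>\<^bsub>G\<^esub> ?h = e z \<otimes>\<^bsub>G\<^esub> e c \<otimes>\<^bsub>G\<^esub> inv\<^bsub>G\<^esub> (e z)"
        using base_point z hG by (simp add: As.group_simps flip: h(2))
      moreover have "e z \<otimes>\<^bsub>G\<^esub> e c \<otimes>\<^bsub>G\<^esub> inv\<^bsub>G\<^esub> (e z) = e d"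
        using d z by (simp add: c as_gen_op As.group_simps)
      ultimately show ?thesis by auto
    qed
  qed
qed

lemma tilde_step_as_gen:
  assumes U: "U \<in> K" and b: "b \<in> X"
  shows "(U, inv\<^bsub>G\<^esub> (e a) \<otimes>\<^bsub>G\<^esub> U \<otimes>\<^bsub>G\<^esub> e b) \<in> tilde_step"
proof -
  obtain h where h: "h \<in> K" "inv\<^bsub>G\<^esub> h \<otimes>\<^bsub>G\<^esub> e a \<otimes>\<^bsub>G\<^esub> h = e b"
    using ex_kernel_conj_base_point [OF b] by blast
  have "tilde_op X op a U h = inv\<^bsub>G\<^esub> (e a) \<otimes>\<^bsub>G\<^esub> U \<otimes>\<^bsub>G\<^esub> (inv\<^bsub>G\<^esub> h \<otimes>\<^bsub>G\<^esub> e a \<otimes>\<^bsub>G\<^esub> h)"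
    using U h(1) base_point by (simp add: tilde_op_def tilde_carrier_iff As.m_assoc)
  then have "tilde_op X op a U h = inv\<^bsub>G\<^esub> (e a) \<otimes>\<^bsub>G\<^esub> U \<otimes>\<^bsub>G\<^esub> e b"
    by (simp add: h(2))
  then show ?thesis using U h(1) unfolding quandle_step_def by force
qed

lemma tilde_linked_mult_gen_inv_gen:
  assumes U: "U \<in> K" and b: "b \<in> X" and c: "c \<in> X"
  shows "tilde_linked U (U \<otimes>\<^bsub>G\<^esub> e b \<otimes>\<^bsub>G\<^esub> inv\<^bsub>G\<^esub> (e c))"
proof -
  let ?W = "U \<otimes>\<^bsub>G\<^esub> e b \<otimes>\<^bsub>G\<^esub> inv\<^bsub>G\<^esub> (e c)"
  have W: "?W \<in> K" using U b c by (simp add: tilde_carrier_iff)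
  have "inv\<^bsub>G\<^esub> (e a) \<otimes>\<^bsub>G\<^esub> ?W \<otimes>\<^bsub>G\<^esub> e c = inv\<^bsub>G\<^esub> (e a) \<otimes>\<^bsub>G\<^esub> U \<otimes>\<^bsub>G\<^esub> e b"
    using U b c base_point by (simp add: tilde_carrier_iff As.group_simps)
  then have "(?W, inv\<^bsub>G\<^esub> (e a) \<otimes>\<^bsub>G\<^esub> U \<otimes>\<^bsub>G\<^esub> e b) \<in> tilde_step"
    using tilde_step_as_gen [OF W c] by simp
  with tilde_step_as_gen [OF U b] show ?thesis
    by (blast intro: rtrancl_trans)
qed

lemma tilde_linked_mult_inv_gen_gen:
  assumes U: "U \<in> K" and b: "b \<in> X" and c: "c \<in> X"
  shows "tilde_linked U (U \<otimes>\<^bsub>G\<^esub> inv\<^bsub>G\<^esub> (e c) \<otimes>\<^bsub>G\<^esub> e b)"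
proof -
  let ?W = "e a \<otimes>\<^bsub>G\<^esub> U \<otimes>\<^bsub>G\<^esub> inv\<^bsub>G\<^esub> (e c)"
  have W: "?W \<in> K" using U c base_point by (simp add: tilde_carrier_iff)
  have "inv\<^bsub>G\<^esub> (e a) \<otimes>\<^bsub>G\<^esub> ?W \<otimes>\<^bsub>G\<^esub> e c = U"
    using U c base_point by (simp add: tilde_carrier_iff As.group_simps)
  then have "(?W, U) \<in> tilde_step"
    using tilde_step_as_gen [OF W c] by simp
  moreover have "inv\<^bsub>G\<^esub> (e a) \<otimes>\<^bsub>G\<^esub> ?W \<otimes>\<^bsub>G\<^esub> e b = U \<otimes>\<^bsub>G\<^esub> inv\<^bsub>G\<^esub> (e c) \<otimes>\<^bsub>G\<^esub> e b"
    using U b c base_point by (simp add: tilde_carrier_iff As.group_simps)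
  then have "(?W, U \<otimes>\<^bsub>G\<^esub> inv\<^bsub>G\<^esub> (e c) \<otimes>\<^bsub>G\<^esub> e b) \<in> tilde_step"
    using tilde_step_as_gen [OF W b] by simp
  ultimately show ?thesis
    by (blast intro: rtrancl_trans)
qed

lemma tilde_linked_one_word:
  assumes "w \<in> lists (X \<times> UNIV)"
  shows "as_class X op w \<otimes>\<^bsub>G\<^esub> e a [^]\<^bsub>G\<^esub> (- eps_word w) \<in> K \<and>
    tilde_linked \<one>\<^bsub>G\<^esub> (as_class X op w \<otimes>\<^bsub>G\<^esub> e a [^]\<^bsub>G\<^esub> (- eps_word w))"
  using assms
proof (induction w rule: rev_induct)
  case Nil
  have "as_class X op [] = \<one>\<^bsub>G\<^esub>" by (simp add: As_def)
  then show ?case by (simp add: eps_word_def tilde_carrier_iff)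
next
  case (snoc s w)
  obtain x b where s: "s = (x, b)" by force
  have w: "w \<in> lists (X \<times> UNIV)" and x: "x \<in> X" using snoc.prems s by auto
  let ?p = "e a [^]\<^bsub>G\<^esub> (- eps_word w)"
  let ?U = "as_class X op w \<otimes>\<^bsub>G\<^esub> ?p"
  have U: "?U \<in> K" and linked: "tilde_linked \<one>\<^bsub>G\<^esub> ?U"
    using snoc.IH [OF w] by auto
  have p: "?p \<in> carrier G" and wG: "as_class X op w \<in> carrier G"
    using base_point w by (simp_all add: as_class_in_carrier)
  obtain y where y: "y \<in> X" "inv\<^bsub>G\<^esub> ?p \<otimes>\<^bsub>G\<^esub> e x \<otimes>\<^bsub>G\<^esub> ?p = e y"
    using conj_int_pow_as_gen [OF base_point x] by blast
  show ?case
  proof (cases b)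
    case True
    have "e a [^]\<^bsub>G\<^esub> (- eps_word (w @ [s])) = ?p \<otimes>\<^bsub>G\<^esub> inv\<^bsub>G\<^esub> (e a)"
      using base_point As.int_pow_mult [of "e a" "- eps_word w" "-1"]
      by (simp add: True s eps_word_def As.int_pow_neg)
    then have "as_class X op (w @ [s]) \<otimes>\<^bsub>G\<^esub> e a [^]\<^bsub>G\<^esub> (- eps_word (w @ [s]))
        = ?U \<otimes>\<^bsub>G\<^esub> e y \<otimes>\<^bsub>G\<^esub> inv\<^bsub>G\<^esub> (e a)"
      using base_point x p wG by (simp add: True s as_class_snoc w As.group_simps flip: y(2))
    moreover have "?U \<otimes>\<^bsub>G\<^esub> e y \<otimes>\<^bsub>G\<^esub> inv\<^bsub>G\<^esub> (e a) \<in> K"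
      using U y(1) base_point by (simp add: tilde_carrier_iff)
    moreover note rtrancl_trans [OF linked tilde_linked_mult_gen_inv_gen [OF U y(1) base_point]]
    ultimately show ?thesis by simp
  next
    case False
    have "e a [^]\<^bsub>G\<^esub> (- eps_word (w @ [s])) = ?p \<otimes>\<^bsub>G\<^esub> e a"
      using base_point As.int_pow_mult [of "e a" "- eps_word w" 1]
      by (simp add: False s eps_word_def)
    then have "as_class X op (w @ [s]) \<otimes>\<^bsub>G\<^esub> e a [^]\<^bsub>G\<^esub> (- eps_word (w @ [s]))
        = ?U \<otimes>\<^bsub>G\<^esub> inv\<^bsub>G\<^esub> (e y) \<otimes>\<^bsub>G\<^esub> e a"
      using base_point x p wG by (simp add: False s as_class_snoc w As.group_simps flip: y(2))
    moreover have "?U \<otimes>\<^bsub>G\<^esub> inv\<^bsub>G\<^esub> (e y) \<otimes>\<^bsub>G\<^esub> e a \<in> K"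
      using U y(1) base_point by (simp add: tilde_carrier_iff)
    moreover note rtrancl_trans [OF linked tilde_linked_mult_inv_gen_gen [OF U base_point y(1)]]
    ultimately show ?thesis by simp
  qed
qed

lemma tilde_linked_one:
  assumes g: "g \<in> K"
  shows "tilde_linked \<one>\<^bsub>G\<^esub> g"
proof -
  have gG: "g \<in> carrier G" and "eps_word (as_rep g) = 0"
    using g by (simp_all add: tilde_carrier_iff eps0_def)
  then show ?thesis
    using tilde_linked_one_word [OF as_rep_of_carrier(1) [OF gG]] as_rep_of_carrier(2) [OF gG] gG
    by simp
qed

end

theorem proposition5p2:
  fixes X :: "'a set" and op :: "'a \<Rightarrow> 'a \<Rightarrow> 'a" and a :: 'a
  assumes "quandle X op" and "quandle_connected X op" and "a \<in> X"
  shows "quandle_connected (tilde_carrier X op) (tilde_op X op a)"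
proof -
  interpret connected_quandle_tilde X op a
    using assms by (simp add: connected_quandle_tilde_def connected_quandle_tilde_axioms_def quandle_adjoint_def)
  have "sym ((tilde_step \<union> tilde_step\<inverse>)\<^sup>*)"
    by (simp add: sym_Un_converse sym_rtrancl)
  then show ?thesis
    unfolding quandle_connected_def
    by (meson rtrancl_trans symD tilde_linked_one)
qed

end
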